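(* Let $j\ge 0$ be an integer and let $g_0^{j+1},\dots,g_j^{j+1}$ be real numbers with $$g_j^{j+1}>g_{j-1}^{j+1}>\dots>g_0^{j+1}>0,$$ and set $g_{-1}^{j+1}:=0$ (this convention is only needed when $j=0$). For any real numbers $v^0,v^1,\dots,v^{j+1}$ define $${}_g\Delta v:=\sum_{s=0}^{j}\big(v^{s+1}-v^s\big)g_s^{j+1},\qquad {}_g\Delta (v^2):=\sum_{s=0}^{j}\big((v^{s+1})^2-(v^s)^2\big)g_s^{j+1}.$$ Then $$v^{j+1}\,{}_g\Delta v\;\ge\;\tfrac12\,{}_g\Delta(v^2)+\frac{1}{2g_j^{j+1}}\big({}_g\Delta v\big)^2,$$ $$v^{j}\,{}_g\Delta v\;\ge\;\tfrac12\,{}_g\Delta(v^2)-\frac{1}{2\big(g_j^{j+1}-g_{j-1}^{j+1}\big)}\big({}_g\Delta v\big)^2.$$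
   Context: The paper states this for every $j=0,1,\dots,M-1$ and for functions $v$ defined on a time mesh $0=t_0<t_1<\dots<t_M=T$, with $v^s=v(t_s)$; the expression ${}_g\Delta v$ is a discrete analog of the Caputo fractional derivative at time level $j+1$. *)

theory Defs
  imports Complex_Main
begin

text \<open>Discrete Caputo-type difference at level j+1 with weights g s = g_s^{j+1}.\<close>
definition gDelta :: "nat \<Rightarrow> (nat \<Rightarrow> real) \<Rightarrow> (nat \<Rightarrow> real) \<Rightarrow> real" where
  "gDelta j g v = (\<Sum>s=0..j. (v (Suc s) - v s) * g s)"

definition gDelta_sq :: "nat \<Rightarrow> (nat \<Rightarrow> real) \<Rightarrow> (nat \<Rightarrow> real) \<Rightarrow> real" where
  "gDelta_sq j g v = (\<Sum>s=0..j. ((v (Suc s))^2 - (v s)^2) * g s)"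

definition gprev :: "nat \<Rightarrow> (nat \<Rightarrow> real) \<Rightarrow> real" where
  "gprev j g = (if j = 0 then 0 else g (j - 1))"

end

theory Submission
  imports Defs "HOL-Analysis.Convex"
begin

text \<open>Put \<open>S m = v\<^sup>j\<^sup>+\<^sup>1 - v\<^sup>m\<close> and \<open>a m = g m - g (m - 1)\<close>, so that \<open>a m > 0\<close> and
  \<open>\<Sum>m\<le>j. a m = g j\<close>. Summation by parts gives \<open>\<^sub>g\<Delta>v = \<Sum> a m S m\<close> and
  \<open>\<^sub>g\<Delta>(v\<^sup>2) = 2 v\<^sup>j\<^sup>+\<^sup>1 \<^sub>g\<Delta>v - \<Sum> a m (S m)\<^sup>2\<close>. The first inequality is then the weighted
  Cauchy-Schwarz inequality \<open>(\<Sum> a S)\<^sup>2 \<le> (\<Sum> a) (\<Sum> a S\<^sup>2)\<close>; for the second, keep only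
  the last term \<open>a j (S j)\<^sup>2\<close> of \<open>\<Sum> a S\<^sup>2\<close> and complete the square in \<open>S j\<close>.\<close>

definition gincr :: "(nat \<Rightarrow> real) \<Rightarrow> nat \<Rightarrow> real" where
  "gincr g m = g m - gprev m g"

lemma sum_gincr: "(\<Sum>m=0..j. gincr g m) = g j"
  by (induction j) (auto simp: gincr_def gprev_def)

lemma gincr_pos:
  assumes "g 0 > 0" and "\<And>s. s < j \<Longrightarrow> g s < g (Suc s)" and "m \<le> j"
  shows "gincr g m > 0"
  using assms by (cases m) (auto simp: gincr_def gprev_def)

lemma summation_by_parts:
  "(\<Sum>s=0..j. (S s - S (Suc s)) * g s) = (\<Sum>m=0..j. S m * gincr g m) - S (Suc j) * g j"
  by (induction j) (auto simp: gincr_def gprev_def algebra_simps)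

lemma weighted_Cauchy_Schwarz:
  fixes w x :: "'a \<Rightarrow> real"
  assumes "\<And>i. i \<in> I \<Longrightarrow> w i \<ge> 0"
  shows "(\<Sum>i\<in>I. w i * x i)\<^sup>2 \<le> (\<Sum>i\<in>I. w i) * (\<Sum>i\<in>I. w i * (x i)\<^sup>2)"
proof -
  have "(\<Sum>i\<in>I. w i * x i)\<^sup>2 = (\<Sum>i\<in>I. sqrt (w i) * (sqrt (w i) * x i))\<^sup>2"
    using assms by (simp add: mult.assoc[symmetric])
  also have "\<dots> \<le> (\<Sum>i\<in>I. (sqrt (w i))\<^sup>2) * (\<Sum>i\<in>I. (sqrt (w i) * x i)\<^sup>2)"
    by (rule Cauchy_Schwarz_ineq_sum)
  also have "\<dots> = (\<Sum>i\<in>I. w i) * (\<Sum>i\<in>I. w i * (x i)\<^sup>2)"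
    using assms by (simp add: power_mult_distrib)
  finally show ?thesis .
qed

lemma gDelta_by_parts:
  "gDelta j g v = (\<Sum>m=0..j. (v (Suc j) - v m) * gincr g m)"
  using summation_by_parts[where S="\<lambda>m. v (Suc j) - v m"] by (simp add: gDelta_def)

lemma gDelta_sq_by_parts:
  "gDelta_sq j g v = 2 * v (Suc j) * gDelta j g v - (\<Sum>m=0..j. (v (Suc j) - v m)\<^sup>2 * gincr g m)"
proof -
  let ?S = "\<lambda>m. (v (Suc j) - v m)\<^sup>2"
  have "gDelta_sq j g v = 2 * v (Suc j) * gDelta j g v - (\<Sum>s=0..j. (?S s - ?S (Suc s)) * g s)"
    by (simp add: gDelta_sq_def gDelta_def sum_distrib_left flip: sum_subtractf)
       (simp add: power2_eq_square algebra_simps)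
  then show ?thesis
    using summation_by_parts[where S="?S"] by simp
qed

lemma square_completion_bound:
  fixes a x d :: real
  assumes "a > 0"
  shows "x * d - d\<^sup>2 / (2 * a) \<le> a * x\<^sup>2 / 2"
proof -
  have "0 \<le> (a * x - d)\<^sup>2 / (2 * a)" using assms by simp
  also have "\<dots> = a * x\<^sup>2 / 2 - x * d + d\<^sup>2 / (2 * a)"
    using assms by (simp add: power2_eq_square field_simps)
  finally show ?thesis by simp
qed

theorem lemma1:
  fixes j :: nat and g v :: "nat \<Rightarrow> real"
  assumes pos: "g 0 > 0"
    and incr: "\<And>s. s < j \<Longrightarrow> g s < g (Suc s)"
  shows "v (Suc j) * gDelta j g v \<ge> gDelta_sq j g v / 2 + (gDelta j g v)^2 / (2 * g j) \<and>
         v j * gDelta j g v \<ge> gDelta_sq j g v / 2 - (gDelta j g v)^2 / (2 * (g j - gprev j g))"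
proof
  define S where "S m = v (Suc j) - v m" for m
  define D where "D = gDelta j g v"
  define E where "E = (\<Sum>m=0..j. (S m)\<^sup>2 * gincr g m)"
  have a_pos: "m \<le> j \<Longrightarrow> gincr g m > 0" for m
    using gincr_pos[OF pos incr] by blast
  have D: "D = (\<Sum>m=0..j. gincr g m * S m)" and E: "gDelta_sq j g v = 2 * v (Suc j) * D - E"
    unfolding D_def E_def S_def by (simp_all add: gDelta_by_parts gDelta_sq_by_parts mult.commute)
  have "g j > 0"
    using sum_pos[of "{0..j}" "gincr g"] a_pos by (simp add: sum_gincr)
  moreover have "D\<^sup>2 \<le> g j * E"
    using weighted_Cauchy_Schwarz[of "{0..j}" "gincr g" S] a_pos
    by (simp add: D E_def sum_gincr mult.commute less_imp_le)
  ultimately show "v (Suc j) * D \<ge> gDelta_sq j g v / 2 + D\<^sup>2 / (2 * g j)"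
    by (simp add: E field_simps)
  have "(S j)\<^sup>2 * gincr g j \<le> E"
    unfolding E_def
    by (simp add: atLeastLessThanSuc_atLeastAtMost[symmetric])
       (intro sum_nonneg mult_nonneg_nonneg zero_le_power2 less_imp_le a_pos, simp)
  have "gDelta_sq j g v / 2 - D\<^sup>2 / (2 * (g j - gprev j g))
      = v (Suc j) * D - E / 2 - D\<^sup>2 / (2 * gincr g j)"
    by (simp add: E gincr_def)
  also have "\<dots> \<le> v (Suc j) * D - S j * D"
    using square_completion_bound[OF a_pos[of j], of "S j" D] \<open>(S j)\<^sup>2 * gincr g j \<le> E\<close>
    by (simp add: mult.commute)
  also have "\<dots> = v j * D"
    by (simp add: S_def algebra_simps)
  finally show "v j * D \<ge> gDelta_sq j g v / 2 - D\<^sup>2 / (2 * (g j - gprev j g))" .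
qed

end
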